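(* Let $\mathfrak{n}$ be a $2$-step nilpotent real Lie algebra with center $\mathfrak{z}$ such that $\mathfrak{n}'=[\mathfrak{n},\mathfrak{n}]=\mathfrak{z}$ and $\dim\mathfrak{n}'$ is odd. Then every complex structure on $\mathfrak{n}$ is $3$-step.
   Context: A complex structure on a real Lie algebra $\mathfrak{g}$ is a linear map $J:\mathfrak{g}\to\mathfrak{g}$ with $J^2=-I$ and $N_J(x,y):=[x,y]+J([Jx,y]+[x,Jy])-[Jx,Jy]=0$ for all $x,y\in\mathfrak{g}$. Given such $J$, define inductively $\mathfrak{a}_0(J)=0$ and $\mathfrak{a}_\ell(J)=\{x\in\mathfrak{g}: [x,\mathfrak{g}]\subset\mathfrak{a}_{\ell-1}(J)\text{ and }[Jx,\mathfrak{g}]\subset\mathfrak{a}_{\ell-1}(J)\}$ for $\ell\ge1$. $J$ is called nilpotent if $\mathfrak{a}_t(J)=\mathfrak{g}$ for some positive integer $t$, and $t$-step if $t$ is the smallest such integer. A Lie algebra $\mathfrak{n}$ is $2$-step nilpotent if it is non-abelian and $\mathfrak{n}'\subset\mathfrak{z}$. *)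

theory Defs
  imports "HOL-Analysis.Analysis"
begin

text \<open>A finite-dimensional real Lie algebra: the underlying space is a
euclidean_space type (every finite-dimensional real vector space is of this form);
the bracket is bilinear, alternating and satisfies the Jacobi identity.\<close>

definition lie_algebra :: "('a::euclidean_space \<Rightarrow> 'a \<Rightarrow> 'a) \<Rightarrow> bool" where
  "lie_algebra br \<longleftrightarrow> bilinear br \<and> (\<forall>x. br x x = 0) \<and>
     (\<forall>x y z. br x (br y z) + br y (br z x) + br z (br x y) = 0)"

definition derived_alg :: "('a::euclidean_space \<Rightarrow> 'a \<Rightarrow> 'a) \<Rightarrow> 'a set" where
  "derived_alg br = span {br x y | x y. True}"

definition center :: "('a::euclidean_space \<Rightarrow> 'a \<Rightarrow> 'a) \<Rightarrow> 'a set" where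
  "center br = {x. \<forall>y. br x y = 0}"

definition two_step_nilpotent :: "('a::euclidean_space \<Rightarrow> 'a \<Rightarrow> 'a) \<Rightarrow> bool" where
  "two_step_nilpotent br \<longleftrightarrow> (\<exists>x y. br x y \<noteq> 0) \<and> derived_alg br \<subseteq> center br"

definition complex_structure ::
  "('a::euclidean_space \<Rightarrow> 'a \<Rightarrow> 'a) \<Rightarrow> ('a \<Rightarrow> 'a) \<Rightarrow> bool" where
  "complex_structure br J \<longleftrightarrow> linear J \<and> (\<forall>x. J (J x) = - x) \<and>
     (\<forall>x y. br x y + J (br (J x) y + br x (J y)) - br (J x) (J y) = 0)"

fun asc_series :: "('a::euclidean_space \<Rightarrow> 'a \<Rightarrow> 'a) \<Rightarrow> ('a \<Rightarrow> 'a) \<Rightarrow> nat \<Rightarrow> 'a set" where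
  "asc_series br J 0 = {0}"
| "asc_series br J (Suc l) =
     {x. (\<forall>y. br x y \<in> asc_series br J l) \<and> (\<forall>y. br (J x) y \<in> asc_series br J l)}"

definition nilpotent_cs :: "('a::euclidean_space \<Rightarrow> 'a \<Rightarrow> 'a) \<Rightarrow> ('a \<Rightarrow> 'a) \<Rightarrow> bool" where
  "nilpotent_cs br J \<longleftrightarrow> (\<exists>t>0. asc_series br J t = UNIV)"

definition t_step :: "('a::euclidean_space \<Rightarrow> 'a \<Rightarrow> 'a) \<Rightarrow> ('a \<Rightarrow> 'a) \<Rightarrow> nat \<Rightarrow> bool" where
  "t_step br J t \<longleftrightarrow> 0 < t \<and> asc_series br J t = UNIV \<and>
     (\<forall>s. 0 < s \<and> s < t \<longrightarrow> asc_series br J s \<noteq> UNIV)"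

end

theory Submission
  imports Defs
begin

text \<open>For a complex structure \<open>J\<close> on a 2-step nilpotent \<open>\<nn>\<close>, the Nijenhuis condition
with a central first argument \<open>u\<close> reads \<open>J [Ju, y] = [Ju, Jy]\<close>, so \<open>[Ju, y]\<close> lies in
\<open>\<aa>\<^sub>1(J) = \<zz> \<inter> J\<zz>\<close>; hence \<open>\<zz> \<subseteq> \<aa>\<^sub>2(J)\<close> and \<open>\<aa>\<^sub>3(J) = \<nn>\<close>.
If \<open>\<aa>\<^sub>2(J) = \<nn>\<close>, then \<open>J\<close> maps \<open>\<nn>'\<close> into \<open>\<zz> = \<nn>'\<close>, and a subspace invariant under a
linear map with \<open>J\<^sup>2 = -1\<close> has even dimension, since \<open>J\<close> has no real eigenvalue.\<close>

lemma linear_image_span_subset: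
  assumes "linear J" and "J ` S \<subseteq> span S"
  shows "J ` span S \<subseteq> span S"
  using assms by (metis span_linear_image span_minimal subspace_span)

lemma image_notin_span_insert_if_square_eq_neg:
  fixes J :: "'a::real_vector \<Rightarrow> 'a"
  assumes J: "linear J" "\<And>x. J (J x) = - x"
    and W: "subspace W" "J ` W \<subseteq> W" and v: "v \<notin> W"
  shows "J v \<notin> span (insert v W)"
proof
  assume "J v \<in> span (insert v W)"
  moreover have "span W = W"
    using W(1) by simp
  ultimately obtain c where w: "J v - c *\<^sub>R v \<in> W"
    by (auto simp: span_breakdown_eq)
  define w where "w = J v - c *\<^sub>R v"
  have "w \<in> W" "J w \<in> W"
    using w W(2) by (auto simp: w_def)
  then have "- (J w + c *\<^sub>R w) \<in> W"
    using W(1) by (meson subspace_add subspace_neg subspace_scale)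
  moreover have "J w = - v - c *\<^sub>R (w + c *\<^sub>R v)"
    using J by (simp add: w_def linear_diff linear_scale)
  then have "- (J w + c *\<^sub>R w) = (1 + c\<^sup>2) *\<^sub>R v"
    by (simp only:) (simp add: algebra_simps power2_eq_square)
  ultimately have "inverse (1 + c\<^sup>2) *\<^sub>R (1 + c\<^sup>2) *\<^sub>R v \<in> W"
    using W(1) subspace_scale by metis
  moreover have "1 + c\<^sup>2 \<noteq> 0"
    using zero_le_power2[of c] by linarith
  ultimately show False
    using v by simp
qed

lemma invariant_subspace_extend_by_two:
  fixes J :: "'a::euclidean_space \<Rightarrow> 'a"
  assumes J: "linear J" "\<And>x. J (J x) = - x"
    and V: "subspace V" "J ` V \<subseteq> V"
    and W: "subspace W" "J ` W \<subseteq> W" "W \<subset> V"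
  obtains W' where "subspace W'" "J ` W' \<subseteq> W'" "W' \<subseteq> V" "dim W' = dim W + 2"
proof -
  obtain v where v: "v \<in> V" "v \<notin> W"
    using W(3) by blast
  let ?S = "insert (J v) (insert v W)"
  show thesis
  proof (rule that[of "span ?S"])
    have "J ` ?S \<subseteq> span ?S"
      using J(2) W(2) by (auto intro: span_base span_neg)
    then show "J ` span ?S \<subseteq> span ?S"
      by (rule linear_image_span_subset[OF J(1)])
    show "span ?S \<subseteq> V"
      using V v W(3) by (intro span_minimal) auto
    have "v \<notin> span W"
      using v W(1) by (metis span_eq_iff)
    then show "dim (span ?S) = dim W + 2"
      using image_notin_span_insert_if_square_eq_neg[OF J W(1,2) v(2)] by (simp add: dim_insert)
  qed simp
qed

lemma even_dim_diff_invariant_subspaces: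
  fixes J :: "'a::euclidean_space \<Rightarrow> 'a"
  assumes J: "linear J" "\<And>x. J (J x) = - x"
    and V: "subspace V" "J ` V \<subseteq> V"
    and W: "subspace W" "J ` W \<subseteq> W" "W \<subseteq> V"
  shows "even (dim V - dim W)"
  using W
proof (induction "dim V - dim W" arbitrary: W rule: less_induct)
  case less
  show ?case
  proof (cases "W = V")
    case False
    then obtain W' where W': "subspace W'" "J ` W' \<subseteq> W'" "W' \<subseteq> V" "dim W' = dim W + 2"
      using invariant_subspace_extend_by_two[OF J V] less.prems by blast
    have "dim W' \<le> dim V"
      using W'(3) by (rule dim_subset)
    then have "even (dim V - dim W')"
      using less.hyps[OF _ W'(1-3)] W'(4) by simp
    then show ?thesis
      using W'(4) \<open>dim W' \<le> dim V\<close> by simp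
  qed simp
qed

lemma even_dim_invariant_subspace:
  fixes J :: "'a::euclidean_space \<Rightarrow> 'a"
  assumes "linear J" "\<And>x. J (J x) = - x" "subspace V" "J ` V \<subseteq> V"
  shows "even (dim V)"
  using even_dim_diff_invariant_subspaces[OF assms, of "{0}"] assms(1,3)
  by (simp add: subspace_0 linear_0)

lemma bracket_in_derived_alg: "br x y \<in> derived_alg br"
  unfolding derived_alg_def by (rule span_base) blast

lemma asc_series_one: "asc_series br J 1 = {x. x \<in> center br \<and> J x \<in> center br}"
  by (simp add: center_def)

lemma asc_series_Suc_eq_UNIV_iff:
  "asc_series br J (Suc l) = UNIV \<longleftrightarrow> (\<forall>x y. br x y \<in> asc_series br J l)"
  by auto

lemma center_subset_asc_series_two:
  assumes "lie_algebra br" "derived_alg br \<subseteq> center br" "complex_structure br J"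
  shows "center br \<subseteq> asc_series br J 2"
proof
  fix u assume u: "u \<in> center br"
  have bracket_central: "br x y \<in> center br" for x y
    using assms(2) bracket_in_derived_alg by blast
  have zero: "0 \<in> asc_series br J 1"
    using assms(1,3)
    by (simp add: asc_series_one center_def lie_algebra_def complex_structure_def
        bilinear_lzero linear_0)
  have "br (J u) y \<in> asc_series br J 1" for y
  proof -
    have "br u y + J (br (J u) y + br u (J y)) - br (J u) (J y) = 0"
      using assms(3) by (simp add: complex_structure_def)
    moreover have "br u y = 0" "br u (J y) = 0"
      using u by (simp_all add: center_def)
    ultimately have "J (br (J u) y) = br (J u) (J y)"
      by simp
    then show ?thesis
      unfolding asc_series_one using bracket_central by simp
  qed
  moreover have "br u y \<in> asc_series br J 1" for y
    using u zero by (simp add: center_def)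
  ultimately show "u \<in> asc_series br J 2"
    by (simp add: numeral_2_eq_2)
qed

lemma asc_series_three_eq_UNIV:
  assumes "lie_algebra br" "derived_alg br \<subseteq> center br" "complex_structure br J"
  shows "asc_series br J 3 = UNIV"
proof -
  have "br x y \<in> asc_series br J 2" for x y
    using center_subset_asc_series_two[OF assms] assms(2) bracket_in_derived_alg by blast
  then show ?thesis
    using asc_series_Suc_eq_UNIV_iff[of br J 2] by (simp add: numeral_3_eq_3)
qed

lemma asc_series_one_neq_UNIV:
  assumes "br x y \<noteq> 0"
  shows "asc_series br J 1 \<noteq> UNIV"
  using assms by (auto simp: asc_series_one center_def)

lemma derived_alg_invariant_if_asc_series_two_eq_UNIV:
  assumes "asc_series br J 2 = UNIV" "linear J" "derived_alg br = center br"
  shows "J ` derived_alg br \<subseteq> derived_alg br"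
proof -
  have "br x y \<in> asc_series br J 1" for x y
    using assms(1) by (metis asc_series_Suc_eq_UNIV_iff Suc_1)
  then have "J (br x y) \<in> derived_alg br" for x y
    unfolding asc_series_one assms(3) by blast
  then show ?thesis
    unfolding derived_alg_def by (intro linear_image_span_subset[OF assms(2)]) auto
qed

theorem mainTheorem7:
  fixes br :: "'a::euclidean_space \<Rightarrow> 'a \<Rightarrow> 'a"
  assumes "lie_algebra br"
    and "two_step_nilpotent br"
    and "derived_alg br = center br"
    and "odd (dim (derived_alg br))"
  shows "\<forall>J. complex_structure br J \<longrightarrow> t_step br J 3"
proof (intro allI impI)
  fix J assume cs: "complex_structure br J"
  then have J: "linear J" "\<And>x. J (J x) = - x"
    by (simp_all add: complex_structure_def)
  obtain x y where "br x y \<noteq> 0"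
    using assms(2) by (auto simp: two_step_nilpotent_def)
  then have "asc_series br J 1 \<noteq> UNIV"
    by (rule asc_series_one_neq_UNIV)
  moreover have "asc_series br J 2 \<noteq> UNIV"
  proof
    assume "asc_series br J 2 = UNIV"
    then have "J ` derived_alg br \<subseteq> derived_alg br"
      using J(1) assms(3) by (rule derived_alg_invariant_if_asc_series_two_eq_UNIV)
    then have "even (dim (derived_alg br))"
      using J by (intro even_dim_invariant_subspace) (simp_all add: derived_alg_def)
    then show False
      using assms(4) by simp
  qed
  moreover have "asc_series br J 3 = UNIV"
    using assms(1,3) cs by (intro asc_series_three_eq_UNIV) simp_all
  ultimately show "t_step br J 3"
    unfolding t_step_def by (metis One_nat_def Suc_1 less_Suc_eq numeral_3_eq_3 not_less0)
qed

end
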